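(* Let $m,v,x>0$, $w\geq 0$ and $u\in\mathbb{R}$. Let $\mathfrak{n}$ be the five-dimensional real Lie algebra with basis $\{E_1,\dots,E_5\}$ whose only non-vanishing brackets (up to antisymmetry) are $$[E_1,E_2]=mE_3+uE_5,\qquad [E_1,E_3]=vE_4+wE_5,\qquad [E_1,E_4]=xE_5.$$ Equip the corresponding simply connected nilpotent Lie group with the left-invariant Riemannian metric for which $\{E_1,\dots,E_5\}$ is orthonormal. Then this metric is an algebraic Ricci soliton if and only if $$x=m,\qquad u=w=0,\qquad v=\tfrac{2}{\sqrt3}m.$$ In that case $$c=-2m^2,\qquad D=\mathrm{diag}\big(\tfrac13m^2,\tfrac32m^2,\tfrac{11}6m^2,\tfrac{13}6m^2,\tfrac52m^2\big),$$ where $D$ is written as a matrix with respect to the basis $\{E_1,\dots,E_5\}$.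
   Context: Let $G$ be a Lie group with Lie algebra $\mathfrak{g}$ and let $g$ be a left-invariant Riemannian metric on $G$. Let $\mathrm{Ric}$ denote the $(1,1)$ Ricci tensor of $g$, viewed as a linear endomorphism of $\mathfrak{g}$. The metric $g$ is an algebraic Ricci soliton if there are a real number $c$ and a derivation $D$ of $\mathfrak{g}$ such that $\mathrm{Ric}=c\,\mathrm{Id}+D$. The notation $\mathrm{diag}(a_1,\dots,a_5)$ denotes the diagonal matrix with these entries. *)

theory Defs
  imports "HOL-Analysis.Analysis" "HOL-Library.Numeral_Type"
begin

text \<open>A real Lie algebra structure on real^'n is given by its bracket br.
  The left-invariant metric is the one for which the standard basis
  (axis i 1) is orthonormal, i.e. the standard inner product.\<close>

definition ad_adj :: "(real^('n::finite) \<Rightarrow> real^'n \<Rightarrow> real^'n) \<Rightarrow> real^'n \<Rightarrow> real^'n \<Rightarrow> real^'n" where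
  "ad_adj br X Y = (\<chi> j. Y \<bullet> br X (axis j 1))"

text \<open>Levi-Civita connection on left-invariant fields (Koszul formula).\<close>
definition lc_conn :: "(real^('n::finite) \<Rightarrow> real^'n \<Rightarrow> real^'n) \<Rightarrow> real^'n \<Rightarrow> real^'n \<Rightarrow> real^'n" where
  "lc_conn br X Y = (1/2) *\<^sub>R (br X Y - ad_adj br X Y - ad_adj br Y X)"

definition curv :: "(real^('n::finite) \<Rightarrow> real^'n \<Rightarrow> real^'n) \<Rightarrow> real^'n \<Rightarrow> real^'n \<Rightarrow> real^'n \<Rightarrow> real^'n" where
  "curv br X Y Z = lc_conn br X (lc_conn br Y Z) - lc_conn br Y (lc_conn br X Z) - lc_conn br (br X Y) Z"

definition ricci_form :: "(real^('n::finite) \<Rightarrow> real^'n \<Rightarrow> real^'n) \<Rightarrow> real^'n \<Rightarrow> real^'n \<Rightarrow> real" where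
  "ricci_form br Y Z = (\<Sum>i\<in>UNIV. curv br (axis i 1) Y Z \<bullet> axis i 1)"

definition ricci_op :: "(real^('n::finite) \<Rightarrow> real^'n \<Rightarrow> real^'n) \<Rightarrow> real^'n \<Rightarrow> real^'n" where
  "ricci_op br Y = (\<chi> j. ricci_form br Y (axis j 1))"

definition is_derivation :: "(real^('n::finite) \<Rightarrow> real^'n \<Rightarrow> real^'n) \<Rightarrow> (real^'n \<Rightarrow> real^'n) \<Rightarrow> bool" where
  "is_derivation br D \<longleftrightarrow> linear D \<and> (\<forall>X Y. D (br X Y) = br (D X) Y + br X (D Y))"

definition algebraic_ricci_soliton :: "(real^('n::finite) \<Rightarrow> real^'n \<Rightarrow> real^'n) \<Rightarrow> bool" where
  "algebraic_ricci_soliton br \<longleftrightarrow>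
     (\<exists>c D. is_derivation br D \<and> (\<forall>X. ricci_op br X = c *\<^sub>R X + D X))"

text \<open>The bracket of the five-dimensional algebra n, extended bilinearly; E_k = axis k 1.\<close>
definition nbr :: "real \<Rightarrow> real \<Rightarrow> real \<Rightarrow> real \<Rightarrow> real \<Rightarrow> real^5 \<Rightarrow> real^5 \<Rightarrow> real^5" where
  "nbr m u v w x X Y =
     (let a12 = X$1 * Y$2 - X$2 * Y$1;
          a13 = X$1 * Y$3 - X$3 * Y$1;
          a14 = X$1 * Y$4 - X$4 * Y$1
      in (m * a12) *\<^sub>R axis 3 1 + (u * a12) *\<^sub>R axis 5 1
         + (v * a13) *\<^sub>R axis 4 1 + (w * a13) *\<^sub>R axis 5 1
         + (x * a14) *\<^sub>R axis 5 1)"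

definition diag5 :: "real \<Rightarrow> real \<Rightarrow> real \<Rightarrow> real \<Rightarrow> real \<Rightarrow> real^5 \<Rightarrow> real^5" where
  "diag5 a1 a2 a3 a4 a5 X =
     (X$1 * a1) *\<^sub>R axis 1 1 + (X$2 * a2) *\<^sub>R axis 2 1 + (X$3 * a3) *\<^sub>R axis 3 1
     + (X$4 * a4) *\<^sub>R axis 4 1 + (X$5 * a5) *\<^sub>R axis 5 1"

end

theory Submission
  imports Defs
begin

text \<open>If \<open>Ric = c Id + D\<close> then \<open>D = Ric - c Id\<close> is forced, so the soliton condition says
  that \<open>Ric - c Id\<close> is a derivation for some \<open>c\<close>. Testing the Leibniz rule on the pairs
  \<open>(E\<^sub>1, E\<^sub>k)\<close> forces \<open>u = w = 0\<close> and three linear relations among \<open>c, m\<^sup>2, v\<^sup>2, x\<^sup>2\<close>,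
  whose unique solution is \<open>x\<^sup>2 = m\<^sup>2\<close>, \<open>v\<^sup>2 = 4m\<^sup>2/3\<close>, \<open>c = -2m\<^sup>2\<close>. Conversely, for these
  values \<open>Ric + 2m\<^sup>2 Id\<close> is diagonal with eigenvalues \<open>d\<^sub>1, d\<^sub>2, d\<^sub>1 + d\<^sub>2, 2d\<^sub>1 + d\<^sub>2, 3d\<^sub>1 + d\<^sub>2\<close>,
  which is a derivation of the algebra.\<close>

lemma ricci_soliton_derivation_eq:
  assumes "\<forall>X. ricci_op br X = c *\<^sub>R X + D X"
  shows "D = (\<lambda>X. ricci_op br X - c *\<^sub>R X)"
  using assms by auto

lemma UNIV_5: "(UNIV :: 5 set) = {1, 2, 3, 4, 5}"
proof -
  have "i \<in> {1, 2, 3, 4, 5}" for i :: 5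
  proof (induct i)
    case (of_int z)
    then have "z = 0 \<or> z = 1 \<or> z = 2 \<or> z = 3 \<or> z = 4" by fastforce
    then show ?case by auto
  qed
  then show ?thesis by blast
qed

lemma sum_UNIV_5: "sum f (UNIV :: 5 set) = f 1 + f 2 + f 3 + f 4 + f 5"
  unfolding UNIV_5 by (simp add: ac_simps)

lemma vec_eq_iff_5:
  "(A :: 'a^5) = B \<longleftrightarrow> A$1 = B$1 \<and> A$2 = B$2 \<and> A$3 = B$3 \<and> A$4 = B$4 \<and> A$5 = B$5"
proof -
  have "(\<forall>i. P i) \<longleftrightarrow> P 1 \<and> P 2 \<and> P 3 \<and> P 4 \<and> P 5" for P :: "5 \<Rightarrow> bool"
    using UNIV_5 by (metis UNIV_I insert_iff singletonD)
  then show ?thesis by (simp add: vec_eq_iff)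
qed

lemma inner_vec_5:
  "(X :: real^5) \<bullet> Y = X$1 * Y$1 + X$2 * Y$2 + X$3 * Y$3 + X$4 * Y$4 + X$5 * Y$5"
  by (simp add: inner_vec_def sum_UNIV_5)

lemma lc_conn_component:
  "lc_conn br X Y $ j = (br X Y $ j - Y \<bullet> br X (axis j 1) - X \<bullet> br Y (axis j 1)) / 2"
  by (simp add: lc_conn_def ad_adj_def)

lemma nbr_component:
  "nbr m u v w x X Y $ 1 = 0"
  "nbr m u v w x X Y $ 2 = 0"
  "nbr m u v w x X Y $ 3 = m * (X$1 * Y$2 - X$2 * Y$1)"
  "nbr m u v w x X Y $ 4 = v * (X$1 * Y$3 - X$3 * Y$1)"
  "nbr m u v w x X Y $ 5 =
     u * (X$1 * Y$2 - X$2 * Y$1) + w * (X$1 * Y$3 - X$3 * Y$1) + x * (X$1 * Y$4 - X$4 * Y$1)"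
  by (simp_all add: nbr_def Let_def axis_def)

lemma diag5_component:
  "diag5 a1 a2 a3 a4 a5 X $ 1 = X$1 * a1"
  "diag5 a1 a2 a3 a4 a5 X $ 2 = X$2 * a2"
  "diag5 a1 a2 a3 a4 a5 X $ 3 = X$3 * a3"
  "diag5 a1 a2 a3 a4 a5 X $ 4 = X$4 * a4"
  "diag5 a1 a2 a3 a4 a5 X $ 5 = X$5 * a5"
  by (simp_all add: diag5_def axis_def)

lemmas ricci_nbr_unfold =
  ricci_op_def ricci_form_def curv_def sum_UNIV_5 inner_vec_5 lc_conn_component nbr_component axis_def

lemma ricci_op_nbr:
  "ricci_op (nbr m u v w x) X $ 1 = - (m\<^sup>2 + u\<^sup>2 + v\<^sup>2 + w\<^sup>2 + x\<^sup>2) / 2 * X$1"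
  "ricci_op (nbr m u v w x) X $ 2 = - (m\<^sup>2 + u\<^sup>2) / 2 * X$2 - u * w / 2 * X$3 - u * x / 2 * X$4"
  "ricci_op (nbr m u v w x) X $ 3 =
     - u * w / 2 * X$2 + (m\<^sup>2 - v\<^sup>2 - w\<^sup>2) / 2 * X$3 - w * x / 2 * X$4 + m * u / 2 * X$5"
  "ricci_op (nbr m u v w x) X $ 4 =
     - u * x / 2 * X$2 - w * x / 2 * X$3 + (v\<^sup>2 - x\<^sup>2) / 2 * X$4 + v * w / 2 * X$5"
  "ricci_op (nbr m u v w x) X $ 5 = m * u / 2 * X$3 + v * w / 2 * X$4 + (u\<^sup>2 + w\<^sup>2 + x\<^sup>2) / 2 * X$5"
  by (simp_all add: ricci_nbr_unfold) (simp_all add: field_simps power2_eq_square)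

lemma nbr_soliton_constants:
  fixes c :: real
  assumes "m \<noteq> 0" "v \<noteq> 0" "x \<noteq> 0"
    and der: "is_derivation (nbr m u v w x) (\<lambda>X. ricci_op (nbr m u v w x) X - c *\<^sub>R X)"
  shows "u = 0 \<and> w = 0 \<and> x\<^sup>2 = m\<^sup>2 \<and> v\<^sup>2 = 4 / 3 * m\<^sup>2 \<and> c = - 2 * m\<^sup>2"
proof -
  define D where "D X = ricci_op (nbr m u v w x) X - c *\<^sub>R X" for X
  have leibniz: "D (nbr m u v w x (axis 1 1) (axis k 1)) $ j
      = (nbr m u v w x (D (axis 1 1)) (axis k 1) + nbr m u v w x (axis 1 1) (D (axis k 1))) $ j"
    for k j
    using der unfolding is_derivation_def D_def by metis
  note coords = D_def ricci_op_nbr nbr_component axis_def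
  have "m * u * v = 0" using leibniz [of 5 4] by (simp add: coords algebra_simps)
  then have u: "u = 0" using assms by simp
  have "v * w * x = 0" using leibniz [of 5 5] by (simp add: coords u algebra_simps)
  then have w: "w = 0" using assms by simp
  have "m * ((m\<^sup>2 - v\<^sup>2) / 2 - c) = m * (- (m\<^sup>2 + v\<^sup>2 + x\<^sup>2) / 2 - m\<^sup>2 / 2 - 2 * c)"
    using leibniz [of 2 3] by (simp add: coords u w algebra_simps del: mult_cancel_left mult_cancel_right)
  then have e3: "2 * c = - 3 * m\<^sup>2 - x\<^sup>2"
    using assms(1-3) by simp (simp add: field_simps)
  have "v * ((v\<^sup>2 - x\<^sup>2) / 2 - c) = v * (- (m\<^sup>2 + v\<^sup>2 + x\<^sup>2) / 2 + (m\<^sup>2 - v\<^sup>2) / 2 - 2 * c)"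
    using leibniz [of 3 4] by (simp add: coords u w algebra_simps del: mult_cancel_left mult_cancel_right)
  then have e4: "2 * c = - 3 * v\<^sup>2"
    using assms(1-3) by simp (simp add: field_simps)
  have "x * (x\<^sup>2 / 2 - c) = x * (- (m\<^sup>2 + v\<^sup>2 + x\<^sup>2) / 2 + (v\<^sup>2 - x\<^sup>2) / 2 - 2 * c)"
    using leibniz [of 4 5] by (simp add: coords u w algebra_simps del: mult_cancel_left mult_cancel_right)
  then have e5: "2 * c = - m\<^sup>2 - 3 * x\<^sup>2"
    using assms(1-3) by simp (simp add: field_simps)
  show ?thesis using u w e3 e4 e5 by (intro conjI) linarith+
qed

lemma is_derivation_nbr_diag5:
  assumes "d3 = d1 + d2" "d4 = d1 + d3" "d5 = d1 + d4"
  shows "is_derivation (nbr m 0 v 0 x) (diag5 d1 d2 d3 d4 d5)"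
proof -
  have "linear (diag5 d1 d2 d3 d4 d5)"
    by (rule linearI) (simp_all add: vec_eq_iff_5 diag5_component algebra_simps)
  then show ?thesis
    unfolding is_derivation_def using assms
    by (simp add: vec_eq_iff_5 diag5_component nbr_component) (simp add: algebra_simps)
qed

lemma ricci_op_nbr_soliton:
  assumes "v\<^sup>2 = 4 / 3 * m\<^sup>2"
  shows "ricci_op (nbr m 0 v 0 m) X = (- 2 * m\<^sup>2) *\<^sub>R X
           + diag5 (m\<^sup>2 / 3) (3 / 2 * m\<^sup>2) (11 / 6 * m\<^sup>2) (13 / 6 * m\<^sup>2) (5 / 2 * m\<^sup>2) X"
  using assms by (simp add: vec_eq_iff_5 ricci_op_nbr diag5_component) (simp add: algebra_simps)

lemma algebraic_ricci_soliton_nbr: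
  assumes "v\<^sup>2 = 4 / 3 * m\<^sup>2"
  shows "algebraic_ricci_soliton (nbr m 0 v 0 m)"
proof -
  have "is_derivation (nbr m 0 v 0 m)
          (diag5 (m\<^sup>2 / 3) (3 / 2 * m\<^sup>2) (11 / 6 * m\<^sup>2) (13 / 6 * m\<^sup>2) (5 / 2 * m\<^sup>2))"
    by (rule is_derivation_nbr_diag5) linarith+
  then show ?thesis
    unfolding algebraic_ricci_soliton_def using ricci_op_nbr_soliton [OF assms] by blast
qed

lemma eq_two_div_sqrt3_iff:
  fixes v m :: real
  assumes "v > 0" "m > 0"
  shows "v = 2 / sqrt 3 * m \<longleftrightarrow> v\<^sup>2 = 4 / 3 * m\<^sup>2"
proof -
  have "(2 / sqrt 3 * m)\<^sup>2 = 4 / 3 * m\<^sup>2" by (simp add: power_mult_distrib power_divide)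
  moreover have "2 / sqrt 3 * m > 0" using assms by simp
  ultimately show ?thesis
    using assms by (metis less_eq_real_def power2_eq_imp_eq)
qed

theorem mainTheorem4:
  fixes m v x w u :: real
  assumes "m > 0" and "v > 0" and "x > 0" and "w \<ge> 0"
  shows "(algebraic_ricci_soliton (nbr m u v w x) \<longleftrightarrow>
            (x = m \<and> u = 0 \<and> w = 0 \<and> v = 2 / sqrt 3 * m))
       \<and> (algebraic_ricci_soliton (nbr m u v w x) \<longrightarrow>
            (\<forall>c D. is_derivation (nbr m u v w x) D \<and>
                   (\<forall>X. ricci_op (nbr m u v w x) X = c *\<^sub>R X + D X) \<longrightarrow>
               c = - 2 * m\<^sup>2 \<and>
               D = diag5 (m\<^sup>2 / 3) (3 / 2 * m\<^sup>2) (11 / 6 * m\<^sup>2) (13 / 6 * m\<^sup>2) (5 / 2 * m\<^sup>2)))"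
proof -
  let ?br = "nbr m u v w x"
  let ?D = "diag5 (m\<^sup>2 / 3) (3 / 2 * m\<^sup>2) (11 / 6 * m\<^sup>2) (13 / 6 * m\<^sup>2) (5 / 2 * m\<^sup>2)"
  let ?params = "x = m \<and> u = 0 \<and> w = 0 \<and> v\<^sup>2 = 4 / 3 * m\<^sup>2"
  have data: "?params \<and> c = - 2 * m\<^sup>2 \<and> D = ?D"
    if der: "is_derivation ?br D" and ric: "\<forall>X. ricci_op ?br X = c *\<^sub>R X + D X" for c D
  proof -
    have D: "D = (\<lambda>X. ricci_op ?br X - c *\<^sub>R X)"
      using ric by (rule ricci_soliton_derivation_eq)
    have "u = 0 \<and> w = 0 \<and> x\<^sup>2 = m\<^sup>2 \<and> v\<^sup>2 = 4 / 3 * m\<^sup>2 \<and> c = - 2 * m\<^sup>2"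
      using assms der unfolding D by (intro nbr_soliton_constants) auto
    then have params: ?params and c: "c = - 2 * m\<^sup>2"
      using assms by (auto simp: power2_eq_iff_nonneg)
    then have "D = ?D"
      unfolding D by (auto simp: ricci_op_nbr_soliton)
    with params c show ?thesis by blast
  qed
  have "?params \<Longrightarrow> algebraic_ricci_soliton ?br"
    using algebraic_ricci_soliton_nbr by blast
  then have "algebraic_ricci_soliton ?br \<longleftrightarrow> ?params"
    using data unfolding algebraic_ricci_soliton_def by blast
  then show ?thesis
    using data eq_two_div_sqrt3_iff assms by blast
qed

end
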